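(* Let $\mathbf{H}\in\mathbb{R}^{m\times n}$ have full column rank and let $\mathcal{S}_A,\mathcal{S}_F\subseteq\{1,\dots,m\}$ be disjoint, $\mathcal{A}=\{\mathbf{a}\in\mathbb{R}^m: a_i=0\ \forall i\notin\mathcal{S}_A\}$. Let $\mathbf{U}\in\mathbb{R}^{m\times n}$ be any matrix whose columns form a basis of $\mathcal{R}(\mathbf{H})$. Define $\tilde{\mathbf{W}}=\mathbf{I}-\mathbf{U}(\mathbf{U}^T\mathbf{U})^{-1}\mathbf{U}^T$, the diagonal matrix $\tilde{\mathbf{\Omega}}\in\mathbb{R}^{m\times m}$ with $\tilde{\mathbf{\Omega}}_{ii}=1/\sqrt{\tilde{\mathbf{W}}_{ii}}$ if $\tilde{\mathbf{W}}_{ii}>0$ and $\tilde{\mathbf{\Omega}}_{ii}=0$ if $\tilde{\mathbf{W}}_{ii}=0$, the row selection matrix $\mathbf{I}_{\mathcal{S}_F}\in\mathbb{R}^{|\mathcal{S}_F|\times m}$ retaining the rows indexed by $\mathcal{S}_F$, and $\mathbf{U}_1$ (resp. $\mathbf{H}_1$) obtained from $\mathbf{U}$ (resp. $\mathbf{H}$) by replacing the rows indexed by $\mathcal{S}_F$ with zero rows. Consider (P1) maximize $\mathbb{E}\big[\sum_{i\in\mathcal{S}_F}\tilde r_i^2\big]$ over $\mathbf{a}$ subject to $\|\mathbf{a}\|_2^2=1$, $\mathbf{a}\in\mathcal{R}(\mathbf{H}_1)\cap\mathcal{A}$, (P2) maximize $\|\mathbf{I}_{\mathcal{S}_F}\tilde{\mathbf{\Omega}}\tilde{\mathbf{W}}\mathbf{a}\|_2^2$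 over $\mathbf{a}$ subject to $\|\mathbf{a}\|_2^2=1$, $\mathbf{a}\in\mathcal{R}(\mathbf{U}_1)\cap\mathcal{A}$, where in (P1) $\tilde{\mathbf{r}}$ is the normalized residue vector defined in the context. Then a vector is a solution of (P2) if and only if it is a solution of (P1).
   Context: Measurement model: $\mathbf{z}=\mathbf{H}\mathbf{x}+\mathbf{e}$ with fixed state $\mathbf{x}$ and $\mathbf{e}\sim\mathcal{N}(\mathbf{0},\sigma^2\mathbf{I})$; the adversary adds $\mathbf{a}\in\mathcal{A}$, giving $\mathbf{z}+\mathbf{a}$. Let $\mathbf{W}=\mathbf{I}-\mathbf{H}(\mathbf{H}^T\mathbf{H})^{-1}\mathbf{H}^T$; the residue is $\mathbf{r}=\mathbf{W}(\mathbf{z}+\mathbf{a})$ and the normalized residue is $\tilde{\mathbf{r}}=\mathbf{\Omega}\mathbf{r}$, where $\mathbf{\Omega}$ is diagonal with $\mathbf{\Omega}_{ii}=0$ if removing row $i$ from $\mathbf{H}$ makes it lose full column rank, and $\mathbf{\Omega}_{ii}=1/\sqrt{\sigma^2\mathbf{W}_{ii}}$ otherwise. The expectation in (P1) is over $\mathbf{e}$. $\mathcal{S}_A$ is the set of adversary-controlled sensors and $\mathcal{S}_F$ the set of sensors to be framed (made to appear as bad data). *)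

theory Defs
  imports "HOL-Analysis.Analysis" "HOL-Probability.Probability"
begin

definition full_col_rank :: "real^'n^'m \<Rightarrow> bool" where
  "full_col_rank H \<longleftrightarrow> rank H = CARD('n)"

definition col_space :: "real^'n^'m \<Rightarrow> (real^'m) set" where
  "col_space H = range (\<lambda>x. H *v x)"

definition zero_rows :: "'m set \<Rightarrow> real^'n^'m \<Rightarrow> real^'n^'m" where
  "zero_rows S H = (\<chi> i. if i \<in> S then 0 else H $ i)"

definition resid_proj :: "real^'n^'m \<Rightarrow> real^'m^'m" where
  "resid_proj H = mat 1 - H ** matrix_inv (transpose H ** H) ** transpose H"

text \<open>Since dimensions
  are types, "removing" row i is rendered as replacing it by a zero row, which
  yields a matrix with the same rank as the one with row i deleted.\<close>
definition loses_rank_without_row :: "real^'n^'m \<Rightarrow> 'm \<Rightarrow> bool" where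
  "loses_rank_without_row H i \<longleftrightarrow> \<not> full_col_rank (zero_rows {i} H)"

text \<open>Normalization matrix Omega of the context (noise std. deviation sigma).\<close>
definition Omega :: "real \<Rightarrow> real^'n^'m \<Rightarrow> real^'m^'m" where
  "Omega \<sigma> H = (\<chi> i j. if i = j \<and> \<not> loses_rank_without_row H i
       then 1 / sqrt (\<sigma>\<^sup>2 * resid_proj H $ i $ i) else 0)"

definition Omega_tilde :: "real^'m^'m \<Rightarrow> real^'m^'m" where
  "Omega_tilde W = (\<chi> i j. if i = j \<and> W $ i $ i > 0 then 1 / sqrt (W $ i $ i) else 0)"

text \<open>Squared Euclidean norm of I_S v (row selection of the entries indexed by S).\<close>
definition sel_norm2 :: "'m set \<Rightarrow> real^'m \<Rightarrow> real" where
  "sel_norm2 S v = (\<Sum>i\<in>S. (v $ i)\<^sup>2)"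

definition attack_space :: "'m set \<Rightarrow> (real^'m) set" where
  "attack_space SA = {a. \<forall>i. i \<notin> SA \<longrightarrow> a $ i = 0}"

definition noise_measure :: "real \<Rightarrow> ('m::finite \<Rightarrow> real) measure" where
  "noise_measure \<sigma> = PiM UNIV (\<lambda>_. density lborel (normal_density 0 \<sigma>))"

text \<open>Objective of (P1): E over e of sum_{i in S_F} tilde r_i^2, where
  tilde r = Omega W (H x + e + a).\<close>
definition P1_obj :: "real \<Rightarrow> real^'n^'m \<Rightarrow> real^'n \<Rightarrow> 'm set \<Rightarrow> real^'m \<Rightarrow> real" where
  "P1_obj \<sigma> H x SF a =
     (\<integral>e. (\<Sum>i\<in>SF. (((Omega \<sigma> H ** resid_proj H) *v (H *v x + vec_lambda e + a)) $ i)\<^sup>2)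
        \<partial>(noise_measure \<sigma>))"

definition is_max_sol :: "('a \<Rightarrow> real) \<Rightarrow> 'a set \<Rightarrow> 'a \<Rightarrow> bool" where
  "is_max_sol f C a \<longleftrightarrow> a \<in> C \<and> (\<forall>b\<in>C. f b \<le> f a)"

end

theory Submission
  imports Defs
begin

text \<open>A basis U of the column space of H is U = H M with M invertible, and right
  multiplication by an invertible matrix changes neither the residual projector W nor the
  column space of the matrix with the rows in S_F zeroed; so (P2) may be read with H in
  place of U.  In (P1), W annihilates H x, so the normalized residue is Omega W e + Omega W a
  with a centred Gaussian e, and the expectation of the sum of squares splits into a
  constant plus the same sum for Omega W a.  Entrywise, Omega W a = Omega_tilde W a / sigma:
  where the two diagonal rules disagree, W_ii = 0 (if row i of H is indispensable for full
  rank, W kills a nonzero vector of R(H) supported on {i}), and since W_ii is the squared norm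
  of row i of the symmetric idempotent W, that whole row vanishes.  So the objective of (P1)
  is a constant plus that of (P2) divided by sigma^2, and the two problems have the same
  maximizers.\<close>

lemma prob_space_noise_measure:
  "\<sigma> > 0 \<Longrightarrow> prob_space (noise_measure \<sigma> :: ('m::finite \<Rightarrow> real) measure)"
  unfolding noise_measure_def by (intro prob_space_PiM prob_space_normal_density)

lemma noise_coordinate_distributed:
  assumes "\<sigma> > 0"
  shows "distributed (noise_measure \<sigma> :: ('m::finite \<Rightarrow> real) measure) lborel (\<lambda>e. e j)
           (normal_density 0 \<sigma>)"
proof -
  let ?N = "density lborel (\<lambda>x. ennreal (normal_density 0 \<sigma> x))"
  have "distr (noise_measure \<sigma> :: ('m \<Rightarrow> real) measure) lborel (\<lambda>e. e j)
      = distr (noise_measure \<sigma> :: ('m \<Rightarrow> real) measure) ?N (\<lambda>e. e j)"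
    by (rule distr_cong) simp_all
  also have "\<dots> = ?N"
    unfolding noise_measure_def
    by (rule distr_PiM_component) (auto intro: prob_space_normal_density[OF assms])
  finally show ?thesis
    unfolding distributed_def noise_measure_def by simp
qed

lemma
  assumes "\<sigma> > 0"
  shows integrable_noise_coordinate:
      "integrable (noise_measure \<sigma> :: ('m::finite \<Rightarrow> real) measure) (\<lambda>e. e j)"
    and expectation_noise_coordinate:
      "integral\<^sup>L (noise_measure \<sigma> :: ('m::finite \<Rightarrow> real) measure) (\<lambda>e. e j) = 0"
    and integrable_noise_coordinate_square:
      "integrable (noise_measure \<sigma> :: ('m::finite \<Rightarrow> real) measure) (\<lambda>e. (e j)\<^sup>2)"
proof -
  note D = noise_coordinate_distributed[OF assms, where 'm='m, of j]
  interpret prob_space "noise_measure \<sigma> :: ('m \<Rightarrow> real) measure"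
    using prob_space_noise_measure[OF assms] .
  show "integrable (noise_measure \<sigma> :: ('m \<Rightarrow> real) measure) (\<lambda>e. e j)"
    using distributed_integrable[OF D, of "\<lambda>x. x"] integrable_normal_moment_nz_1[OF assms] by simp
  show "integral\<^sup>L (noise_measure \<sigma> :: ('m \<Rightarrow> real) measure) (\<lambda>e. e j) = 0"
    using normal_distributed_expectation[OF assms D] .
  show "integrable (noise_measure \<sigma> :: ('m \<Rightarrow> real) measure) (\<lambda>e. (e j)\<^sup>2)"
    using distributed_integrable[OF D, of "\<lambda>x. x\<^sup>2"] integrable_normal_moment[OF assms, of 0 2] by simp
qed

lemma integrable_noise_coordinate_mult:
  assumes "\<sigma> > 0"
  shows "integrable (noise_measure \<sigma> :: ('m::finite \<Rightarrow> real) measure) (\<lambda>e. e j * e k)"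
proof (rule Bochner_Integration.integrable_bound)
  show "integrable (noise_measure \<sigma> :: ('m \<Rightarrow> real) measure) (\<lambda>e. (e j)\<^sup>2 + (e k)\<^sup>2)"
    using integrable_noise_coordinate_square[OF assms] by (intro Bochner_Integration.integrable_add)
  show "AE e in noise_measure \<sigma>. norm (e j * e k) \<le> norm ((e j)\<^sup>2 + (e k)\<^sup>2)"
  proof (rule AE_I2)
    have "\<bar>a * b\<bar> \<le> a\<^sup>2 + b\<^sup>2" for a b :: real
    proof -
      have "2 * \<bar>a\<bar> * \<bar>b\<bar> \<le> a\<^sup>2 + b\<^sup>2"
        using sum_squares_bound[of "\<bar>a\<bar>" "\<bar>b\<bar>"] by simp
      moreover have "0 \<le> \<bar>a\<bar> * \<bar>b\<bar>" by simp
      ultimately show ?thesis unfolding abs_mult by linarith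
    qed
    then show "norm (e j * e k) \<le> norm ((e j)\<^sup>2 + (e k)\<^sup>2)" for e :: "'m \<Rightarrow> real"
      by simp
  qed
qed (unfold noise_measure_def, measurable)

lemma
  fixes c :: "'m::finite \<Rightarrow> real"
  assumes "\<sigma> > 0"
  shows integrable_noise_linear_form:
      "integrable (noise_measure \<sigma>) (\<lambda>e. \<Sum>j\<in>UNIV. c j * e j)"
    and expectation_noise_linear_form:
      "integral\<^sup>L (noise_measure \<sigma>) (\<lambda>e. \<Sum>j\<in>UNIV. c j * e j) = 0"
    and integrable_noise_linear_form_square:
      "integrable (noise_measure \<sigma>) (\<lambda>e. (\<Sum>j\<in>UNIV. c j * e j)\<^sup>2)"
proof -
  show "integrable (noise_measure \<sigma>) (\<lambda>e. \<Sum>j\<in>UNIV. c j * e j)"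
    by (intro Bochner_Integration.integrable_sum Bochner_Integration.integrable_mult_right
        integrable_noise_coordinate[OF assms])
  show "integral\<^sup>L (noise_measure \<sigma>) (\<lambda>e. \<Sum>j\<in>UNIV. c j * e j) = 0"
    using integrable_noise_coordinate[OF assms, where 'm='m]
    by (subst Bochner_Integration.integral_sum) (simp_all add: expectation_noise_coordinate[OF assms])
  have square: "(\<lambda>e. (\<Sum>j\<in>UNIV. c j * e j)\<^sup>2) = (\<lambda>e. \<Sum>j\<in>UNIV. \<Sum>k\<in>UNIV. c j * c k * (e j * e k))"
    by (simp add: power2_eq_square sum_product mult_ac)
  show "integrable (noise_measure \<sigma>) (\<lambda>e. (\<Sum>j\<in>UNIV. c j * e j)\<^sup>2)"
    unfolding square
    by (intro Bochner_Integration.integrable_sum Bochner_Integration.integrable_mult_right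
        integrable_noise_coordinate_mult[OF assms])
qed

lemma (in prob_space) expectation_sum_shifted_squares:
  fixes X :: "'i \<Rightarrow> 'a \<Rightarrow> real"
  assumes "finite S"
    and "\<And>i. i \<in> S \<Longrightarrow> integrable M (X i)"
    and "\<And>i. i \<in> S \<Longrightarrow> expectation (X i) = 0"
    and "\<And>i. i \<in> S \<Longrightarrow> integrable M (\<lambda>\<omega>. (X i \<omega>)\<^sup>2)"
  shows "expectation (\<lambda>\<omega>. \<Sum>i\<in>S. (X i \<omega> + d i)\<^sup>2)
       = expectation (\<lambda>\<omega>. \<Sum>i\<in>S. (X i \<omega>)\<^sup>2) + (\<Sum>i\<in>S. (d i)\<^sup>2)"
proof -
  have "(\<lambda>\<omega>. \<Sum>i\<in>S. (X i \<omega> + d i)\<^sup>2)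
      = (\<lambda>\<omega>. (\<Sum>i\<in>S. (X i \<omega>)\<^sup>2) + (\<Sum>i\<in>S. 2 * d i * X i \<omega>) + (\<Sum>i\<in>S. (d i)\<^sup>2))"
    by (simp add: power2_sum sum.distrib mult_ac add_ac)
  moreover have "expectation (\<lambda>\<omega>. \<Sum>i\<in>S. 2 * d i * X i \<omega>) = 0"
    using assms(2,3) by (simp add: Bochner_Integration.integral_sum)
  ultimately show ?thesis
    using assms(2,4) by (simp add: prob_space)
qed

lemma matrix_diff_ldistrib: "(A :: 'a::ring_1^'n^'m) ** (B - C) = A ** B - A ** C"
  by (vector matrix_matrix_mult_def sum_subtractf algebra_simps)

lemma matrix_diff_rdistrib: "((A :: 'a::ring_1^'n^'m) - B) ** C = A ** C - B ** C"
  by (vector matrix_matrix_mult_def sum_subtractf algebra_simps)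

lemma transpose_diff: "transpose ((A :: 'a::ring_1^'n^'m) - B) = transpose A - transpose B"
  by (simp add: transpose_def vec_eq_iff)

lemma matrix_mul_cancel_right: "M ** N = mat 1 \<Longrightarrow> (X :: 'a::semiring_1^'n^'k) ** M ** N = X"
  by (simp flip: matrix_mul_assoc)

lemma
  fixes A :: "'a::semiring_1^'n^'n"
  assumes "invertible A"
  shows matrix_inv_right: "A ** matrix_inv A = mat 1"
    and matrix_inv_left: "matrix_inv A ** A = mat 1"
  using someI_ex[OF assms[unfolded invertible_def]] unfolding matrix_inv_def by auto

lemma matrix_inv_unique:
  fixes A B :: "real^'n^'n"
  assumes "B ** A = mat 1"
  shows "matrix_inv A = B"
proof -
  have "invertible A" using assms invertible_left_inverse by blast
  then have "B = B ** A ** matrix_inv A" by (simp add: matrix_inv_right flip: matrix_mul_assoc)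
  then show ?thesis by (simp add: assms)
qed

lemma invertible_gram_matrix:
  fixes H :: "real^'n^'m"
  assumes "inj ((*v) H)"
  shows "invertible (transpose H ** H)"
proof -
  have "x = 0" if "(transpose H ** H) *v x = 0" for x
  proof -
    have "(H *v x) \<bullet> (H *v x) = x \<bullet> ((transpose H ** H) *v x)"
      using dot_lmul_matrix[of x "transpose H" "H *v x"] by (simp add: matrix_vector_mul_assoc)
    then have "H *v x = H *v 0" using that by simp
    then show "x = 0" using injD[OF assms] by blast
  qed
  then show ?thesis using matrix_left_invertible_ker invertible_left_inverse by blast
qed

lemma
  fixes H :: "real^'n^'m"
  assumes "inj ((*v) H)"
  shows resid_proj_mult_self: "resid_proj H ** H = 0"
    and transpose_resid_proj: "transpose (resid_proj H) = resid_proj H"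
    and resid_proj_idempotent: "resid_proj H ** resid_proj H = resid_proj H"
proof -
  define G where "G = matrix_inv (transpose H ** H)"
  define P where "P = H ** G ** transpose H"
  have W: "resid_proj H = mat 1 - P" unfolding resid_proj_def P_def G_def ..
  have GH: "G ** (transpose H ** H) = mat 1" and HG: "(transpose H ** H) ** G = mat 1"
    unfolding G_def using invertible_gram_matrix[OF assms] by (simp_all add: matrix_inv_left matrix_inv_right)
  have "transpose G ** (transpose H ** H) = mat 1"
    using arg_cong[OF HG, of transpose] by (simp add: matrix_transpose_mul matrix_mul_assoc)
  then have GT: "transpose G = G" unfolding G_def by (rule matrix_inv_unique[symmetric])
  have PH: "P ** H = H" unfolding P_def using GH by (simp flip: matrix_mul_assoc)
  show "resid_proj H ** H = 0" unfolding W matrix_diff_rdistrib PH by simp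
  show "transpose (resid_proj H) = resid_proj H"
    unfolding W transpose_diff P_def by (simp add: matrix_transpose_mul GT matrix_mul_assoc)
  have "P ** P = P" using PH unfolding P_def by (simp add: matrix_mul_assoc)
  then show "resid_proj H ** resid_proj H = resid_proj H"
    unfolding W matrix_diff_rdistrib matrix_diff_ldistrib by simp
qed

lemma resid_proj_diag_eq_row_norm:
  fixes H :: "real^'n^'m"
  assumes "inj ((*v) H)"
  shows "resid_proj H $ i $ i = (\<Sum>k\<in>UNIV. (resid_proj H $ i $ k)\<^sup>2)"
proof -
  let ?W = "resid_proj H"
  have "?W $ i $ i = (?W ** transpose ?W) $ i $ i"
    by (simp add: transpose_resid_proj resid_proj_idempotent assms)
  then show ?thesis by (simp add: matrix_matrix_mult_def transpose_def power2_eq_square)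
qed

lemma resid_proj_row_zero:
  fixes H :: "real^'n^'m"
  assumes "inj ((*v) H)" and "resid_proj H $ i $ i \<le> 0"
  shows "(resid_proj H *v a) $ i = 0"
proof -
  have "(\<Sum>k\<in>UNIV. (resid_proj H $ i $ k)\<^sup>2) = 0"
    using assms resid_proj_diag_eq_row_norm[OF assms(1), of i]
    by (metis antisym sum_nonneg zero_le_power2)
  then have "\<forall>k. resid_proj H $ i $ k = 0" by (simp add: sum_nonneg_eq_0_iff)
  then show ?thesis by (simp add: matrix_vector_mult_def)
qed

lemma zero_rows_mult_vec: "(zero_rows S A *v v) $ k = (if k \<in> S then 0 else (A *v v) $ k)"
  by (simp add: zero_rows_def matrix_vector_mult_def)

lemma resid_proj_diag_zero_if_loses_rank:
  fixes H :: "real^'n^'m"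
  assumes injH: "inj ((*v) H)" and "loses_rank_without_row H i"
  shows "resid_proj H $ i $ i = 0"
proof -
  obtain v where "v \<noteq> 0" and v: "zero_rows {i} H *v v = 0"
    using assms(2) matrix_nonfull_linear_equations_eq
    unfolding loses_rank_without_row_def full_col_rank_def by blast
  define y where "y = H *v v"
  have "y \<noteq> 0" using \<open>v \<noteq> 0\<close> injD[OF injH, of v 0] unfolding y_def by auto
  moreover have y_off: "y $ k = 0" if "k \<noteq> i" for k
    using arg_cong[OF v, of "\<lambda>z. z $ k"] that unfolding zero_rows_mult_vec y_def by simp
  ultimately have "y $ i \<noteq> 0" by (metis vec_eq_iff zero_index)
  have "resid_proj H *v y = 0"
    unfolding y_def by (simp add: matrix_vector_mul_assoc resid_proj_mult_self[OF injH])
  moreover have "(resid_proj H *v y) $ i = resid_proj H $ i $ i * y $ i"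
    using y_off by (simp add: matrix_vector_mult_def sum.remove[of UNIV i])
  ultimately show ?thesis using \<open>y $ i \<noteq> 0\<close> by simp
qed

lemma resid_proj_mult_invertible:
  fixes H :: "real^'n^'m" and M :: "real^'n^'n"
  assumes injH: "inj ((*v) H)" and "invertible M"
  shows "resid_proj (H ** M) = resid_proj H"
proof -
  define Mi where "Mi = matrix_inv M"
  define G where "G = matrix_inv (transpose H ** H)"
  have M_Mi: "M ** Mi = mat 1" and Mi_M: "Mi ** M = mat 1"
    unfolding Mi_def using assms(2) by (simp_all add: matrix_inv_left matrix_inv_right)
  have Mi_M_transpose: "transpose Mi ** transpose M = mat 1"
    using arg_cong[OF M_Mi, of transpose] by (simp add: matrix_transpose_mul)
  have G_gram: "G ** transpose H ** H = mat 1"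
    unfolding G_def using invertible_gram_matrix[OF injH]
    by (simp add: matrix_inv_left flip: matrix_mul_assoc)
  have G_cancel: "X ** G ** transpose H ** H = X" for X :: "real^'n^'k"
    using G_gram by (simp flip: matrix_mul_assoc)
  note cancel = matrix_mul_cancel_right[OF M_Mi] matrix_mul_cancel_right[OF Mi_M_transpose] G_cancel
  have "Mi ** G ** transpose Mi ** (transpose (H ** M) ** (H ** M))
      = Mi ** G ** transpose Mi ** transpose M ** transpose H ** H ** M"
    by (simp add: matrix_transpose_mul matrix_mul_assoc)
  also have "\<dots> = mat 1"
    using Mi_M by (simp add: cancel)
  finally have "matrix_inv (transpose (H ** M) ** (H ** M)) = Mi ** G ** transpose Mi"
    by (rule matrix_inv_unique)
  then have "H ** M ** matrix_inv (transpose (H ** M) ** (H ** M)) ** transpose (H ** M)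
      = H ** M ** Mi ** G ** transpose Mi ** transpose M ** transpose H"
    by (simp add: matrix_transpose_mul matrix_mul_assoc)
  also have "\<dots> = H ** G ** transpose H" by (simp add: cancel)
  finally show ?thesis unfolding resid_proj_def G_def by simp
qed

lemma basis_of_col_space_factor:
  fixes H U :: "real^'n^'m"
  assumes "inj ((*v) H)" and "rank U = CARD('n)" and "col_space U = col_space H"
  obtains M where "invertible M" and "U = H ** M"
proof -
  have "\<exists>v. H *v v = column j U" for j
  proof -
    have "column j U \<in> col_space U"
      unfolding col_space_def by (metis matrix_vector_mult_basis rangeI)
    then show ?thesis using assms(3) unfolding col_space_def by auto
  qed
  then obtain v where v: "\<And>j. H *v v j = column j U" by metis
  define M :: "real^'n^'n" where "M = (\<chi> k j. v j $ k)"
  have U: "U = H ** M"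
  proof -
    have "(H ** M) $ i $ j = (H *v v j) $ i" for i j
      by (simp add: M_def matrix_matrix_mult_def matrix_vector_mult_def)
    then show ?thesis by (simp add: vec_eq_iff v column_def)
  qed
  have "inj ((*v) U)" using assms(2) full_rank_injective by blast
  then have "inj ((*v) M)"
    unfolding U by (simp add: inj_on_def flip: matrix_vector_mul_assoc)
  then have "invertible M" using matrix_left_invertible_injective invertible_left_inverse by blast
  with U show ?thesis using that by blast
qed

lemma zero_rows_matrix_mul: "zero_rows S ((A :: real^'n^'m) ** M) = zero_rows S A ** M"
  by (simp add: zero_rows_def matrix_matrix_mult_def vec_eq_iff)

lemma col_space_mult_invertible:
  fixes A :: "real^'n^'m" and M :: "real^'n^'n"
  assumes "invertible M"
  shows "col_space (A ** M) = col_space A"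
proof -
  have "A *v x = (A ** M) *v (matrix_inv M *v x)" for x
    using assms by (simp add: matrix_vector_mul_assoc matrix_inv_right flip: matrix_mul_assoc)
  then have "col_space A \<subseteq> col_space (A ** M)" unfolding col_space_def by auto
  moreover have "col_space (A ** M) \<subseteq> col_space A"
    unfolding col_space_def by (auto simp flip: matrix_vector_mul_assoc)
  ultimately show ?thesis by blast
qed

lemma diag_matrix_mul_vec:
  assumes "\<And>j. j \<noteq> i \<Longrightarrow> D $ i $ j = 0"
  shows "(((D :: real^'m^'m) ** W) *v y) $ i = D $ i $ i * (W *v y) $ i"
proof -
  have "(D *v z) $ i = (\<Sum>j\<in>UNIV. D $ i $ j * z $ j)" for z
    by (simp add: matrix_vector_mult_def)
  then have "((D ** W) *v y) $ i = (\<Sum>j\<in>UNIV. D $ i $ j * (W *v y) $ j)"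
    by (simp flip: matrix_vector_mul_assoc)
  also have "\<dots> = D $ i $ i * (W *v y) $ i"
    using assms by (simp add: sum.remove[of UNIV i])
  finally show ?thesis .
qed

lemma Omega_resid_proj_component_square:
  fixes H :: "real^'n^'m"
  assumes injH: "inj ((*v) H)" and "\<sigma> > 0"
  shows "(((Omega \<sigma> H ** resid_proj H) *v b) $ i)\<^sup>2
     = (((Omega_tilde (resid_proj H) ** resid_proj H) *v b) $ i)\<^sup>2 / \<sigma>\<^sup>2"
proof -
  let ?W = "resid_proj H"
  have Omega: "((Omega \<sigma> H ** ?W) *v b) $ i = Omega \<sigma> H $ i $ i * (?W *v b) $ i"
    by (rule diag_matrix_mul_vec) (simp add: Omega_def)
  have Omega_tilde: "((Omega_tilde ?W ** ?W) *v b) $ i = Omega_tilde ?W $ i $ i * (?W *v b) $ i"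
    by (rule diag_matrix_mul_vec) (simp add: Omega_tilde_def)
  show ?thesis
  proof (cases "?W $ i $ i > 0")
    case True
    then have "\<not> loses_rank_without_row H i"
      using resid_proj_diag_zero_if_loses_rank[OF injH] by force
    with True show ?thesis
      unfolding Omega Omega_tilde using assms(2)
      by (simp add: Omega_def Omega_tilde_def power_mult_distrib power_divide real_sqrt_mult)
  next
    case False
    then have "(?W *v b) $ i = 0" using resid_proj_row_zero[OF injH] by simp
    then show ?thesis unfolding Omega Omega_tilde by simp
  qed
qed

lemma P1_obj_split:
  fixes H :: "real^'n^'m"
  assumes injH: "inj ((*v) H)" and "\<sigma> > 0"
  shows "P1_obj \<sigma> H x SF b
     = P1_obj \<sigma> H x SF 0 + sel_norm2 SF ((Omega_tilde (resid_proj H) ** resid_proj H) *v b) / \<sigma>\<^sup>2"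
proof -
  define T where "T = Omega \<sigma> H ** resid_proj H"
  define K where "K = integral\<^sup>L (noise_measure \<sigma>) (\<lambda>e. \<Sum>i\<in>SF. (\<Sum>j\<in>UNIV. T $ i $ j * e j)\<^sup>2)"
  interpret prob_space "noise_measure \<sigma> :: ('m \<Rightarrow> real) measure"
    using prob_space_noise_measure[OF assms(2)] .
  have "T *v (H *v x) = 0"
    unfolding T_def by (simp add: matrix_vector_mul_assoc resid_proj_mult_self[OF injH] flip: matrix_mul_assoc)
  then have "T *v (H *v x + vec_lambda e + c) = T *v vec_lambda e + T *v c" for e c
    by (simp add: matrix_vector_right_distrib)
  then have residue: "(T *v (H *v x + vec_lambda e + c)) $ i = (\<Sum>j\<in>UNIV. T $ i $ j * e j) + (T *v c) $ i"
    for e c i by (simp add: matrix_vector_mult_def)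
  have P1_obj: "P1_obj \<sigma> H x SF c = K + (\<Sum>i\<in>SF. ((T *v c) $ i)\<^sup>2)" for c
    unfolding P1_obj_def T_def[symmetric] residue K_def
    by (rule expectation_sum_shifted_squares)
      (simp_all add: integrable_noise_linear_form[OF assms(2)] expectation_noise_linear_form[OF assms(2)]
        integrable_noise_linear_form_square[OF assms(2)])
  have "(\<Sum>i\<in>SF. ((T *v b) $ i)\<^sup>2)
      = sel_norm2 SF ((Omega_tilde (resid_proj H) ** resid_proj H) *v b) / \<sigma>\<^sup>2"
    unfolding T_def sel_norm2_def
    by (simp add: Omega_resid_proj_component_square[OF assms] sum_divide_distrib)
  then show ?thesis by (simp add: P1_obj)
qed

lemma is_max_sol_affine_iff:
  assumes "s > 0"
  shows "is_max_sol (\<lambda>b. K + f b / s) C a \<longleftrightarrow> is_max_sol f C a"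
  using assms by (simp add: is_max_sol_def divide_le_cancel)

theorem theorem4:
  fixes H U :: "real^'n^'m" and x :: "real^'n" and \<sigma> :: real
    and SA SF :: "'m set" and a :: "real^'m"
  assumes "full_col_rank H"
    and "SA \<inter> SF = {}"
    and "\<sigma> > 0"
    and "rank U = CARD('n)" and "col_space U = col_space H"
  shows "is_max_sol (\<lambda>b. sel_norm2 SF ((Omega_tilde (resid_proj U) ** resid_proj U) *v b))
           ({b. norm b ^ 2 = 1} \<inter> col_space (zero_rows SF U) \<inter> attack_space SA) a
     \<longleftrightarrow>
         is_max_sol (P1_obj \<sigma> H x SF)
           ({b. norm b ^ 2 = 1} \<inter> col_space (zero_rows SF H) \<inter> attack_space SA) a"
proof -
  have injH: "inj ((*v) H)"
    using assms(1) full_rank_injective unfolding full_col_rank_def by blast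
  obtain M where "invertible M" and U: "U = H ** M"
    using basis_of_col_space_factor[OF injH assms(4,5)] .
  have "resid_proj U = resid_proj H"
    unfolding U by (rule resid_proj_mult_invertible[OF injH \<open>invertible M\<close>])
  moreover have "col_space (zero_rows SF U) = col_space (zero_rows SF H)"
    unfolding U zero_rows_matrix_mul by (rule col_space_mult_invertible[OF \<open>invertible M\<close>])
  moreover obtain K where "P1_obj \<sigma> H x SF
      = (\<lambda>b. K + sel_norm2 SF ((Omega_tilde (resid_proj H) ** resid_proj H) *v b) / \<sigma>\<^sup>2)"
    using P1_obj_split[OF injH assms(3)] by blast
  ultimately show ?thesis
    using assms(3) by (simp add: is_max_sol_affine_iff)
qed

end
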